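(* Let $n\ge 1$ and consider an operational theory that admits a preparation noncontextual hidden variable model. Consider any protocol for $n$-bit parity-oblivious multiplexing in this theory: for each $x\in\{0,1\}^n$ Alice implements a preparation $P_x$, and for each $y\in\{1,\dots,n\}$ Bob implements a binary-outcome measurement $M_y$ and outputs its outcome $b\in\{0,1\}$. Suppose the protocol is parity-oblivious: for every $s\in\mathrm{Par}$, every measurement $M$ of the theory and every outcome $k$ of $M$, $$\sum_{x:\,x\cdot s=0}p(P_x|k,M)=\sum_{x:\,x\cdot s=1}p(P_x|k,M),$$ where $p(P_x|k,M)$ is the posterior probability of $x$ given outcome $k$ of $M$ under the uniform prior on $x$ (equivalently, $\sum_{x:\,x\cdot s=0}p(k|P_x,M)=\sum_{x:\,x\cdot s=1}p(k|P_x,M)$). Then $$p(b=x_y)=\frac{1}{2^n n}\sum_{y=1}^{n}\sum_{x\in\{0,1\}^n}p(b=x_y|P_x,M_y)\le\frac{n+1}{2n}.$$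
   Context: An operational theory specifies a set of preparation procedures $P$ and measurement procedures $M$ and assigns a probability $p(k|P,M)$ to each outcome $k$ of measurement $M$ given preparation $P$; a procedure that chooses a preparation at random from a list with given probabilities and implements it is also a preparation, whose outcome probabilities are the corresponding convex combination. A hidden variable model of the theory assigns to each preparation $P$ a probability distribution $p(\lambda|P)$ over a space of hidden variables $\lambda$ and to each measurement $M$ conditional outcome distributions $p(k|\lambda,M)$ such that $p(k|P,M)=\int d\lambda\, p(k|\lambda,M)p(\lambda|P)$ for all $P,M,k$; a random mixture of preparations is represented by the corresponding mixture of their distributions $p(\lambda|P)$. The model is preparation noncontextual if whenever two preparations $P,P'$ satisfy $p(k|P,M)=p(k|P',M)$ for all measurements $M$ and outcomes $k$, then $p(\lambda|P)=p(\lambda|P')$. For $x,s\in\{0,1\}^n$, $x\cdot s=\bigoplus_i x_is_i$ (sum modulo 2), called the $s$-parity of $x$; $\mathrm{Par}=\{r\in\{0,1\}^n:\sum_i r_i\ge 2\}$. In $n$-bit parity-oblivious multiplexing, Alice's input $x$ is uniform on $\{0,1\}^n$, Bob's input $y$ is uniform on $\{1,\dots,n\}$ (independently), and Bob must output $b=x_y$, the $y$th bit of $x$. *)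

theory Defs
  imports "HOL-Probability.Probability"
begin

text \<open>Bit strings in {0,1}^n are represented as bool lists of length n
  (True = 1, False = 0); the i-th bit (1-based) of x is x ! (i - 1).\<close>

definition bitvecs :: "nat \<Rightarrow> bool list set" where
  "bitvecs n = {x. length x = n}"

definition sparity :: "bool list \<Rightarrow> bool list \<Rightarrow> bool" where
  "sparity x s = odd (card {i. i < length x \<and> x ! i \<and> s ! i})"

definition Par :: "nat \<Rightarrow> bool list set" where
  "Par n = {s \<in> bitvecs n. card {i. i < n \<and> s ! i} \<ge> 2}"

text \<open>Hidden variable model: hidden variable space L (a measurable space),
  distributions mu P over it (all on the sigma-algebra of L), response functions
  xi M k (conditional outcome distributions over the outcome set Out M),
  reproducing the operational probabilities p P M k = p(k|P,M).\<close>

definition hv_model ::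
  "'l measure \<Rightarrow> ('p \<Rightarrow> 'l measure) \<Rightarrow> ('m \<Rightarrow> 'k \<Rightarrow> 'l \<Rightarrow> real)
   \<Rightarrow> ('m \<Rightarrow> 'k set) \<Rightarrow> ('p \<Rightarrow> 'm \<Rightarrow> 'k \<Rightarrow> real) \<Rightarrow> bool" where
  "hv_model L mu xi Out p \<longleftrightarrow>
     (\<forall>P. prob_space (mu P) \<and> sets (mu P) = sets L) \<and>
     (\<forall>M k. xi M k \<in> borel_measurable L) \<and>
     (\<forall>M k l. 0 \<le> xi M k l) \<and>
     (\<forall>M l. ((\<lambda>k. xi M k l) has_sum 1) (Out M)) \<and>
     (\<forall>P M k. k \<in> Out M \<longrightarrow> p P M k = integral\<^sup>L (mu P) (xi M k))"

definition is_mixture :: "('p \<Rightarrow> real) \<Rightarrow> bool" where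
  "is_mixture w \<longleftrightarrow> finite {P. w P \<noteq> 0} \<and> (\<forall>P. 0 \<le> w P) \<and>
     sum w {P. w P \<noteq> 0} = 1"

definition mix_prob :: "('p \<Rightarrow> 'm \<Rightarrow> 'k \<Rightarrow> real) \<Rightarrow> ('p \<Rightarrow> real) \<Rightarrow> 'm \<Rightarrow> 'k \<Rightarrow> real" where
  "mix_prob p w M k = (\<Sum>P\<in>{P. w P \<noteq> 0}. w P * p P M k)"

definition mix_dist :: "('p \<Rightarrow> 'l measure) \<Rightarrow> ('p \<Rightarrow> real) \<Rightarrow> 'l set \<Rightarrow> real" where
  "mix_dist mu w A = (\<Sum>P\<in>{P. w P \<noteq> 0}. w P * measure (mu P) A)"

text \<open>Preparation noncontextuality, applied to all preparations including random
  mixtures (mixtures represented by the mixture of their distributions).\<close>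
definition prep_noncontextual ::
  "'l measure \<Rightarrow> ('p \<Rightarrow> 'l measure) \<Rightarrow> ('m \<Rightarrow> 'k set) \<Rightarrow> ('p \<Rightarrow> 'm \<Rightarrow> 'k \<Rightarrow> real) \<Rightarrow> bool" where
  "prep_noncontextual L mu Out p \<longleftrightarrow>
     (\<forall>w v. is_mixture w \<and> is_mixture v \<and>
        (\<forall>M. \<forall>k\<in>Out M. mix_prob p w M k = mix_prob p v M k) \<longrightarrow>
        (\<forall>A\<in>sets L. mix_dist mu w A = mix_dist mu v A))"

end

theory Submission
  imports Defs
begin

(*
  Preparation noncontextuality turns parity obliviousness into a statement about the hidden
  variable: for every s in Par the uniform mixtures of the preparations of even and of odd
  s-parity have the same distribution, so for every set T of at least two bit positions the
  character-weighted combination  sum_x (-1)^(sum_{i in T} x_i) mu_x  vanishes.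
  Writing Bob's response as  xi(b | lambda, M_y) = (1 + (-1)^b a_y(lambda)) / 2  with |a_y| <= 1,
  the success probability is 1/2 plus a multiple of the bias  sum_y sum_x (-1)^(x_y) int a_y dmu_x.
  The pointwise nonnegative function  prod_y (1 - (-1)^(x_y) a_y(lambda))  expands into characters
  of x; after integrating against mu_x and summing over x only the terms with |T| <= 1 survive,
  which leaves  0 <= 2^n - bias  and hence the bound (n+1)/(2n).
*)

lemma integrable_bounded_prob_space:
  fixes f :: "'l \<Rightarrow> real"
  assumes "prob_space M" "sets M = sets L" "f \<in> borel_measurable L" "\<And>l. \<bar>f l\<bar> \<le> B"
  shows "integrable M f"
proof -
  interpret prob_space M by fact
  show ?thesis
    by (rule integrable_const_bound[where B = B])
      (use assms in \<open>auto simp: measurable_cong_sets[OF assms(2) refl]\<close>)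
qed

lemma
  fixes \<nu> :: "'a \<Rightarrow> 'l measure"
  assumes C: "finite C" "C \<noteq> {}" and prob: "\<And>x. prob_space (\<nu> x)" and sets: "\<And>x. sets (\<nu> x) = sets L"
  shows sets_bind_count_space_finite: "sets (count_space C \<bind> \<nu>) = sets L"
    and emeasure_bind_count_space_finite:
      "A \<in> sets L \<Longrightarrow> emeasure (count_space C \<bind> \<nu>) A = (\<Sum>x\<in>C. emeasure (\<nu> x) A)"
    and nn_integral_bind_count_space_finite:
      "g \<in> borel_measurable L \<Longrightarrow>
         (\<integral>\<^sup>+l. g l \<partial>(count_space C \<bind> \<nu>)) = (\<Sum>x\<in>C. \<integral>\<^sup>+l. g l \<partial>\<nu> x)"
proof -
  have kernel: "\<nu> \<in> measurable (count_space C) (subprob_algebra L)"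
    by (auto simp: space_subprob_algebra prob sets prob_space_imp_subprob_space)
  show "sets (count_space C \<bind> \<nu>) = sets L"
    using C sets by (intro sets_bind) auto
  show "emeasure (count_space C \<bind> \<nu>) A = (\<Sum>x\<in>C. emeasure (\<nu> x) A)" if "A \<in> sets L"
    using C by (simp add: emeasure_bind[OF _ kernel that] nn_integral_count_space_finite)
  show "(\<integral>\<^sup>+l. g l \<partial>(count_space C \<bind> \<nu>)) = (\<Sum>x\<in>C. \<integral>\<^sup>+l. g l \<partial>\<nu> x)"
    if "g \<in> borel_measurable L"
    using C by (simp add: nn_integral_bind[OF that kernel] nn_integral_count_space_finite)
qed

lemma sum_integral_eq_if_sum_measure_eq:
  fixes \<nu> :: "'a \<Rightarrow> 'l measure" and f :: "'l \<Rightarrow> real"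
  assumes fin: "finite C0" "finite C1"
    and prob: "\<And>x. prob_space (\<nu> x)" and sets: "\<And>x. sets (\<nu> x) = sets L"
    and eq: "\<And>A. A \<in> sets L \<Longrightarrow> (\<Sum>x\<in>C0. measure (\<nu> x) A) = (\<Sum>x\<in>C1. measure (\<nu> x) A)"
    and f: "f \<in> borel_measurable L" and bounded: "\<And>l. \<bar>f l\<bar> \<le> B"
  shows "(\<Sum>x\<in>C0. integral\<^sup>L (\<nu> x) f) = (\<Sum>x\<in>C1. integral\<^sup>L (\<nu> x) f)"
proof -
  have space: "measure (\<nu> x) (space L) = 1" for x
    using prob_space.prob_space[OF prob] sets_eq_imp_space_eq[OF sets] by metis
  have card_eq: "card C0 = card C1"
    using eq[of "space L"] by (simp add: space)
  show ?thesis
  proof (cases "C0 = {}")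
    case True
    then show ?thesis using card_eq fin by simp
  next
    case False
    then have ne: "C0 \<noteq> {}" "C1 \<noteq> {}" using card_eq fin by auto
    have mixtures_eq: "count_space C0 \<bind> \<nu> = count_space C1 \<bind> \<nu>"
    proof (rule measure_eqI)
      show "sets (count_space C0 \<bind> \<nu>) = sets (count_space C1 \<bind> \<nu>)"
        using fin ne by (simp add: sets_bind_count_space_finite prob sets)
      fix A assume "A \<in> sets (count_space C0 \<bind> \<nu>)"
      then have A: "A \<in> sets L" using fin ne by (simp add: sets_bind_count_space_finite prob sets)
      have "emeasure (\<nu> x) A = ennreal (measure (\<nu> x) A)" for x
        using prob[of x] by (simp add: prob_space_def finite_measure.emeasure_eq_measure)
      then have "(\<Sum>x\<in>C. emeasure (\<nu> x) A) = ennreal (\<Sum>x\<in>C. measure (\<nu> x) A)" for C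
        by simp
      then show "emeasure (count_space C0 \<bind> \<nu>) A = emeasure (count_space C1 \<bind> \<nu>) A"
        using fin ne A by (simp add: emeasure_bind_count_space_finite prob sets eq)
    qed
    \<comment> \<open>Shifting f by B makes it nonnegative, so that its integrals are nonnegative integrals over the two mixtures.\<close>
    define g where "g = (\<lambda>l. f l + B)"
    have g_nonneg: "0 \<le> g l" for l
      using bounded[of l] by (auto simp: g_def abs_le_iff)
    have g_meas: "g \<in> borel_measurable L"
      using f unfolding g_def by measurable
    have f_int: "integrable (\<nu> x) f" for x
      by (rule integrable_bounded_prob_space[OF prob sets f bounded])
    have g_int: "integrable (\<nu> x) g" and int_g: "integral\<^sup>L (\<nu> x) g = integral\<^sup>L (\<nu> x) f + B"
      for x
    proof -
      interpret prob_space "\<nu> x" by (rule prob)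
      show "integrable (\<nu> x) g" "integral\<^sup>L (\<nu> x) g = integral\<^sup>L (\<nu> x) f + B"
        using f_int by (simp_all add: g_def Bochner_Integration.integral_add prob_space)
    qed
    have "ennreal (\<Sum>x\<in>C. integral\<^sup>L (\<nu> x) g) = (\<integral>\<^sup>+l. g l \<partial>(count_space C \<bind> \<nu>))"
      if "finite C" "C \<noteq> {}" for C
    proof -
      have "(\<integral>\<^sup>+l. g l \<partial>\<nu> x) = ennreal (integral\<^sup>L (\<nu> x) g)" for x
        by (intro nn_integral_eq_integral g_int) (simp add: g_nonneg)
      then show ?thesis
        using that g_nonneg g_meas
        by (simp add: nn_integral_bind_count_space_finite prob sets sum_ennreal integral_nonneg_AE)
    qed
    then have "ennreal (\<Sum>x\<in>C0. integral\<^sup>L (\<nu> x) g) = ennreal (\<Sum>x\<in>C1. integral\<^sup>L (\<nu> x) g)"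
      using fin ne mixtures_eq by metis
    then have "(\<Sum>x\<in>C0. integral\<^sup>L (\<nu> x) g) = (\<Sum>x\<in>C1. integral\<^sup>L (\<nu> x) g)"
      by (subst (asm) ennreal_inj) (auto intro!: sum_nonneg integral_nonneg_AE simp: g_nonneg)
    then show ?thesis
      using card_eq by (simp add: int_g sum.distrib)
  qed
qed

definition uniform_mixture :: "('x \<Rightarrow> 'p) \<Rightarrow> 'x set \<Rightarrow> 'p \<Rightarrow> real" where
  "uniform_mixture Prep C P = real (card {x\<in>C. Prep x = P}) / real (card C)"

lemma support_uniform_mixture:
  assumes "finite C" "C \<noteq> {}"
  shows "{P. uniform_mixture Prep C P \<noteq> 0} = Prep ` C"
  using assms by (auto simp: uniform_mixture_def)

lemma sum_uniform_mixture:
  assumes "finite C" "C \<noteq> {}"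
  shows "(\<Sum>P\<in>{P. uniform_mixture Prep C P \<noteq> 0}. uniform_mixture Prep C P * g P)
       = (\<Sum>x\<in>C. g (Prep x)) / real (card C)"
proof -
  have "(\<Sum>x\<in>C. g (Prep x)) = (\<Sum>P\<in>Prep ` C. \<Sum>x\<in>{x\<in>C. Prep x = P}. g (Prep x))"
    by (rule sum.image_gen) fact
  also have "\<dots> = (\<Sum>P\<in>Prep ` C. real (card {x\<in>C. Prep x = P}) * g P)"
    by simp
  finally show ?thesis
    unfolding support_uniform_mixture[OF assms] by (simp add: uniform_mixture_def sum_divide_distrib)
qed

lemma is_mixture_uniform_mixture:
  assumes "finite C" "C \<noteq> {}"
  shows "is_mixture (uniform_mixture Prep C)"
  using assms sum_uniform_mixture[OF assms, of Prep "\<lambda>_. 1"]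
  by (auto simp: is_mixture_def support_uniform_mixture uniform_mixture_def)

lemma prep_noncontextual_sum_measure_eq:
  fixes Prep :: "'x \<Rightarrow> 'p"
  assumes pnc: "prep_noncontextual L mu Out p"
    and fin: "finite C0" "finite C1" and card_eq: "card C0 = card C1"
    and same_stats: "\<And>M k. k \<in> Out M \<Longrightarrow> (\<Sum>x\<in>C0. p (Prep x) M k) = (\<Sum>x\<in>C1. p (Prep x) M k)"
    and A: "A \<in> sets L"
  shows "(\<Sum>x\<in>C0. measure (mu (Prep x)) A) = (\<Sum>x\<in>C1. measure (mu (Prep x)) A)"
proof (cases "C0 = {}")
  case True
  then show ?thesis using fin card_eq by simp
next
  case False
  then have ne: "C0 \<noteq> {}" "C1 \<noteq> {}" using fin card_eq by auto
  note mix0 = sum_uniform_mixture[OF fin(1) ne(1)] is_mixture_uniform_mixture[OF fin(1) ne(1)]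
  note mix1 = sum_uniform_mixture[OF fin(2) ne(2)] is_mixture_uniform_mixture[OF fin(2) ne(2)]
  have "\<forall>M. \<forall>k\<in>Out M. mix_prob p (uniform_mixture Prep C0) M k = mix_prob p (uniform_mixture Prep C1) M k"
    by (simp add: mix_prob_def mix0 mix1 same_stats card_eq)
  then have "mix_dist mu (uniform_mixture Prep C0) A = mix_dist mu (uniform_mixture Prep C1) A"
    using pnc mix0 mix1 A unfolding prep_noncontextual_def by blast
  then show ?thesis
    using card_eq ne fin by (simp add: mix_dist_def mix0 mix1)
qed

lemma finite_bitvecs: "finite (bitvecs n)"
  using finite_lists_length_eq[of "UNIV :: bool set" n] by (simp add: bitvecs_def)

lemma card_bitvecs: "card (bitvecs n) = 2 ^ n"
  using card_lists_length_eq[of "UNIV :: bool set" n] by (simp add: bitvecs_def)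

lemma sparity_flip:
  assumes i: "i < length x" "s ! i"
  shows "sparity (x[i := \<not> x ! i]) s \<longleftrightarrow> \<not> sparity x s"
proof -
  define S where "S y = {j. j < length y \<and> y ! j \<and> s ! j}" for y :: "bool list"
  let ?x' = "x[i := \<not> x ! i]"
  have fin: "finite (S y)" for y by (simp add: S_def)
  have same_off_i: "S ?x' - {i} = S x - {i}"
    by (auto simp: S_def nth_list_update)
  have split: "card (S y) = card (S y - {i}) + of_bool (i \<in> S y)" for y
    using card.remove[OF fin, of i y] by (cases "i \<in> S y") simp_all
  have "i \<in> S x \<longleftrightarrow> x ! i" "i \<in> S ?x' \<longleftrightarrow> \<not> x ! i"
    using i by (simp_all add: S_def)
  then have "card (S ?x') + card (S x) = 2 * card (S x - {i}) + 1"
    using split[of x] split[of ?x'] same_off_i by simp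
  then show ?thesis
    unfolding sparity_def S_def[symmetric] by presburger
qed

lemma card_sparity_eq:
  assumes "i < n" "s ! i"
  shows "card {x\<in>bitvecs n. sparity x s} = card {x\<in>bitvecs n. \<not> sparity x s}"
proof -
  let ?flip = "\<lambda>x. x[i := \<not> x ! i]"
  have "bij_betw ?flip {x\<in>bitvecs n. sparity x s} {x\<in>bitvecs n. \<not> sparity x s}"
    by (rule bij_betw_byWitness[where f' = ?flip]) (use assms sparity_flip in \<open>auto simp: bitvecs_def\<close>)
  then show ?thesis by (rule bij_betw_same_card)
qed

lemma indicator_in_Par:
  assumes "T \<subseteq> {..<n}" "2 \<le> card T"
  shows "map (\<lambda>i. i \<in> T) [0..<n] \<in> Par n"
proof -
  have "{i. i < n \<and> map (\<lambda>i. i \<in> T) [0..<n] ! i} = T"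
    using assms(1) by auto
  then show ?thesis using assms(2) by (simp add: Par_def bitvecs_def)
qed

definition bit_sign :: "bool \<Rightarrow> real" where
  "bit_sign b = (if b then -1 else 1)"

definition parity_character :: "nat set \<Rightarrow> bool list \<Rightarrow> real" where
  "parity_character T x = (\<Prod>i\<in>T. bit_sign (x ! i))"

lemma parity_character_eq_sparity:
  assumes "x \<in> bitvecs n" "T \<subseteq> {..<n}"
  shows "parity_character T x = (if sparity x (map (\<lambda>i. i \<in> T) [0..<n]) then -1 else 1)"
proof -
  have T: "finite T" using assms(2) finite_subset by blast
  have "{i. i < length x \<and> x ! i \<and> map (\<lambda>i. i \<in> T) [0..<n] ! i} = {i\<in>T. x ! i}"
    using assms by (auto simp: bitvecs_def)
  moreover have "parity_character T x = (-1) ^ card {i\<in>T. x ! i}"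
    unfolding parity_character_def bit_sign_def using prod.If_cases[OF T, of "\<lambda>i. x ! i" "\<lambda>_. -1" "\<lambda>_. 1"]
    by (simp add: Int_def)
  ultimately show ?thesis
    by (simp add: sparity_def minus_one_power_iff)
qed

lemma hv_modelD:
  assumes "hv_model L mu xi Out p"
  shows "prob_space (mu P)" "sets (mu P) = sets L" "xi M k \<in> borel_measurable L" "0 \<le> xi M k l"
    "((\<lambda>k. xi M k l) has_sum 1) (Out M)"
    "k \<in> Out M \<Longrightarrow> p P M k = integral\<^sup>L (mu P) (xi M k)"
  using assms by (auto simp: hv_model_def)

lemma parity_character_sum_eq_0:
  fixes Prep :: "bool list \<Rightarrow> 'p" and g :: "'l \<Rightarrow> real"
  assumes model: "hv_model L mu xi Out p" and pnc: "prep_noncontextual L mu Out p"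
    and oblivious: "\<forall>s\<in>Par n. \<forall>M. \<forall>k\<in>Out M.
       (\<Sum>x\<in>{x\<in>bitvecs n. \<not> sparity x s}. p (Prep x) M k)
     = (\<Sum>x\<in>{x\<in>bitvecs n. sparity x s}. p (Prep x) M k)"
    and T: "T \<subseteq> {..<n}" "2 \<le> card T"
    and g: "g \<in> borel_measurable L" "\<And>l. \<bar>g l\<bar> \<le> B"
  shows "(\<Sum>x\<in>bitvecs n. parity_character T x * integral\<^sup>L (mu (Prep x)) g) = 0"
proof -
  define s where "s = map (\<lambda>i. i \<in> T) [0..<n]"
  let ?C0 = "{x\<in>bitvecs n. \<not> sparity x s}" and ?C1 = "{x\<in>bitvecs n. sparity x s}"
  have s: "s \<in> Par n"
    unfolding s_def using T by (rule indicator_in_Par)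
  obtain i where "i \<in> T"
    using T(2) by fastforce
  then have "i < n" "s ! i"
    using T(1) by (auto simp: s_def)
  then have card_eq: "card ?C0 = card ?C1"
    by (metis card_sparity_eq)
  have fin: "finite ?C0" "finite ?C1"
    by (simp_all add: finite_bitvecs)
  have "(\<Sum>x\<in>?C0. integral\<^sup>L (mu (Prep x)) g) = (\<Sum>x\<in>?C1. integral\<^sup>L (mu (Prep x)) g)"
  proof (rule sum_integral_eq_if_sum_measure_eq[OF fin _ _ _ g])
    show "prob_space (mu (Prep x))" "sets (mu (Prep x)) = sets L" for x
      using model by (simp_all add: hv_modelD)
    show "(\<Sum>x\<in>?C0. measure (mu (Prep x)) A) = (\<Sum>x\<in>?C1. measure (mu (Prep x)) A)"
      if "A \<in> sets L" for A
      using oblivious s by (intro prep_noncontextual_sum_measure_eq[OF pnc fin card_eq _ that]) auto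
  qed
  moreover have "(\<Sum>x\<in>bitvecs n. parity_character T x * integral\<^sup>L (mu (Prep x)) g)
      = (\<Sum>x\<in>?C0. integral\<^sup>L (mu (Prep x)) g) - (\<Sum>x\<in>?C1. integral\<^sup>L (mu (Prep x)) g)"
  proof -
    have "(\<Sum>x\<in>bitvecs n. parity_character T x * integral\<^sup>L (mu (Prep x)) g)
        = (\<Sum>x\<in>bitvecs n. if sparity x s then - integral\<^sup>L (mu (Prep x)) g else integral\<^sup>L (mu (Prep x)) g)"
      using T(1) by (intro sum.cong refl) (simp add: parity_character_eq_sparity s_def)
    then show ?thesis
      by (simp add: sum.If_cases finite_bitvecs sum_negf Int_def Collect_conj_eq[symmetric])
  qed
  ultimately show ?thesis by simp
qed

lemma sum_Pow_eq_if_card_ge_2_zero: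
  assumes "finite I" and zero: "\<And>T. T \<subseteq> I \<Longrightarrow> 2 \<le> card T \<Longrightarrow> F T = 0"
  shows "(\<Sum>T\<in>Pow I. F T) = F {} + (\<Sum>i\<in>I. F {i})"
proof -
  let ?small = "insert {} ((\<lambda>i. {i}) ` I)"
  have "(\<Sum>T\<in>Pow I. F T) = (\<Sum>T\<in>?small. F T)"
  proof (rule sum.mono_neutral_right)
    show "\<forall>T\<in>Pow I - ?small. F T = 0"
    proof
      fix T assume T: "T \<in> Pow I - ?small"
      then have "finite T" using \<open>finite I\<close> finite_subset by blast
      then have "card T \<noteq> 0" "card T \<noteq> 1"
        using T by (auto simp: card_1_singleton_iff)
      with T show "F T = 0" by (intro zero) auto
    qed
  qed (use \<open>finite I\<close> in auto)
  also have "\<dots> = F {} + (\<Sum>i\<in>I. F {i})"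
    using \<open>finite I\<close> by (subst sum.insert) (auto simp: sum.reindex inj_on_def)
  finally show ?thesis .
qed

lemma abs_bit_sign [simp]: "\<bar>bit_sign b\<bar> = 1"
  by (simp add: bit_sign_def)

lemma parity_character_empty [simp]: "parity_character {} x = 1"
  and parity_character_singleton [simp]: "parity_character {i} x = bit_sign (x ! i)"
  by (simp_all add: parity_character_def)

lemma parity_oblivious_bias_le:
  fixes \<nu> :: "bool list \<Rightarrow> 'l measure" and a :: "nat \<Rightarrow> 'l \<Rightarrow> real"
  assumes prob: "\<And>x. prob_space (\<nu> x)" and sets: "\<And>x. sets (\<nu> x) = sets L"
    and oblivious: "\<And>T g B. T \<subseteq> {..<n} \<Longrightarrow> 2 \<le> card T \<Longrightarrow> g \<in> borel_measurable L \<Longrightarrow>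
      (\<And>l. \<bar>g l\<bar> \<le> B) \<Longrightarrow> (\<Sum>x\<in>bitvecs n. parity_character T x * integral\<^sup>L (\<nu> x) g) = 0"
    and a_meas: "\<And>i. a i \<in> borel_measurable L" and a_bound: "\<And>i l. i < n \<Longrightarrow> \<bar>a i l\<bar> \<le> 1"
  shows "(\<Sum>i<n. \<Sum>x\<in>bitvecs n. bit_sign (x ! i) * integral\<^sup>L (\<nu> x) (a i)) \<le> 2 ^ n"
proof -
  define c where "c T l = (-1) ^ card T * (\<Prod>i\<in>T. a i l)" for T l
  have c_meas: "c T \<in> borel_measurable L" for T
    unfolding c_def using a_meas by measurable
  have c_bound: "\<bar>c T l\<bar> \<le> 1" if "T \<subseteq> {..<n}" for T l
  proof -
    have "\<bar>c T l\<bar> = (\<Prod>i\<in>T. \<bar>a i l\<bar>)"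
      by (simp add: c_def abs_mult power_abs abs_prod)
    also have "\<dots> \<le> 1"
      using that a_bound by (intro prod_le_1) auto
    finally show ?thesis .
  qed
  have c_int: "integrable (\<nu> x) (c T)" if "T \<subseteq> {..<n}" for T x
    using integrable_bounded_prob_space[OF prob sets c_meas c_bound[OF that]] .
  have expand: "(\<Prod>i<n. 1 - a i l * bit_sign (x ! i)) = (\<Sum>T\<in>Pow {..<n}. parity_character T x * c T l)"
    for x l
    by (simp add: prod_diff_conv_sum c_def parity_character_def prod.distrib mult_ac)
  have "0 \<le> (\<Sum>x\<in>bitvecs n. integral\<^sup>L (\<nu> x) (\<lambda>l. \<Prod>i<n. 1 - a i l * bit_sign (x ! i)))"
  proof (intro sum_nonneg integral_nonneg_AE AE_I2 prod_nonneg)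
    fix x l i assume "i \<in> {..<n}"
    then have "\<bar>a i l * bit_sign (x ! i)\<bar> \<le> 1" by (simp add: abs_mult a_bound)
    then show "0 \<le> 1 - a i l * bit_sign (x ! i)" by linarith
  qed
  also have "\<dots> = (\<Sum>T\<in>Pow {..<n}. \<Sum>x\<in>bitvecs n. parity_character T x * integral\<^sup>L (\<nu> x) (c T))"
    unfolding expand using c_int by (subst sum.swap) (simp add: Bochner_Integration.integral_sum)
  also have "\<dots> = (\<Sum>x\<in>bitvecs n. integral\<^sup>L (\<nu> x) (c {}))
      + (\<Sum>i<n. \<Sum>x\<in>bitvecs n. bit_sign (x ! i) * integral\<^sup>L (\<nu> x) (c {i}))"
    by (subst sum_Pow_eq_if_card_ge_2_zero) (auto intro: oblivious c_meas c_bound)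
  also have "\<dots> = 2 ^ n - (\<Sum>i<n. \<Sum>x\<in>bitvecs n. bit_sign (x ! i) * integral\<^sup>L (\<nu> x) (a i))"
  proof -
    have "c {} = (\<lambda>_. 1)" "c {i} = (\<lambda>l. - a i l)" for i
      by (simp_all add: c_def fun_eq_iff)
    then show ?thesis
      using prob_space.prob_space[OF prob] by (simp add: card_bitvecs sum_negf)
  qed
  finally show ?thesis by simp
qed

lemma hv_model_binary_response:
  fixes xi :: "'m \<Rightarrow> 'k::zero_neq_one \<Rightarrow> 'l \<Rightarrow> real"
  assumes model: "hv_model L mu xi Out p" and binary: "Out M = {0, 1}"
  shows "xi M 0 l + xi M 1 l = 1"
proof -
  have "((\<lambda>k. xi M k l) has_sum 1) {0, 1}"
    using hv_modelD(5)[OF model] binary by metis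
  moreover have "((\<lambda>k. xi M k l) has_sum (\<Sum>k\<in>{0, 1}. xi M k l)) {0, 1}"
    by (rule has_sum_finite) simp
  ultimately show ?thesis
    using has_sum_unique by fastforce
qed

lemma hv_model_binary_response_diff_bound:
  fixes xi :: "'m \<Rightarrow> 'k::zero_neq_one \<Rightarrow> 'l \<Rightarrow> real"
  assumes model: "hv_model L mu xi Out p" and binary: "Out M = {0, 1}"
  shows "\<bar>xi M 0 l - xi M 1 l\<bar> \<le> 1"
  using hv_model_binary_response[OF assms, of l] hv_modelD(4)[OF model, of M 0 l]
    hv_modelD(4)[OF model, of M 1 l] by linarith

lemma hv_model_binary_prob:
  fixes xi :: "'m \<Rightarrow> 'k::zero_neq_one \<Rightarrow> 'l \<Rightarrow> real"
  assumes model: "hv_model L mu xi Out p" and binary: "Out M = {0, 1}"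
  shows "p P M (of_bool b) = 1/2 + bit_sign b / 2 * integral\<^sup>L (mu P) (\<lambda>l. xi M 0 l - xi M 1 l)"
proof -
  let ?a = "\<lambda>l. xi M 0 l - xi M 1 l"
  interpret prob_space "mu P"
    using model by (rule hv_modelD)
  have "?a \<in> borel_measurable L"
    using hv_modelD(3)[OF model] by (intro borel_measurable_diff)
  then have a_int: "integrable (mu P) ?a"
    using model hv_model_binary_response_diff_bound[OF assms]
    by (intro integrable_bounded_prob_space[where B = 1]) (auto simp: hv_modelD)
  have "xi M (of_bool b) = (\<lambda>l. 1/2 + bit_sign b / 2 * ?a l)"
    using hv_model_binary_response[OF assms] by (auto simp: bit_sign_def fun_eq_iff field_simps)
  then have "p P M (of_bool b) = integral\<^sup>L (mu P) (\<lambda>l. 1/2 + bit_sign b / 2 * ?a l)"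
    using hv_modelD(6)[OF model, of "of_bool b" M P] binary by simp
  also have "\<dots> = 1/2 + bit_sign b / 2 * integral\<^sup>L (mu P) ?a"
    using a_int by (subst Bochner_Integration.integral_add) (auto simp: prob_space)
  finally show ?thesis .
qed

lemma hv_model_success_sum:
  fixes xi :: "'m \<Rightarrow> 'k::zero_neq_one \<Rightarrow> 'l \<Rightarrow> real"
  assumes model: "hv_model L mu xi Out p" and binary: "\<And>y. y \<in> {1..n} \<Longrightarrow> Out (Meas y) = {0, 1}"
  shows "(\<Sum>y=1..n. \<Sum>x\<in>bitvecs n. p (Prep x) (Meas y) (of_bool (x ! (y - 1))))
       = real n * 2 ^ n / 2 + (\<Sum>i<n. \<Sum>x\<in>bitvecs n. bit_sign (x ! i) *
           integral\<^sup>L (mu (Prep x)) (\<lambda>l. xi (Meas (Suc i)) 0 l - xi (Meas (Suc i)) 1 l)) / 2"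
proof -
  have "(\<Sum>y=1..n. \<Sum>x\<in>bitvecs n. p (Prep x) (Meas y) (of_bool (x ! (y - 1))))
      = (\<Sum>i<n. \<Sum>x\<in>bitvecs n. 1/2 + bit_sign (x ! i) / 2 *
           integral\<^sup>L (mu (Prep x)) (\<lambda>l. xi (Meas (Suc i)) 0 l - xi (Meas (Suc i)) 1 l))"
    using binary by (auto simp: sum.atLeast1_atMost_eq hv_model_binary_prob[OF model] intro!: sum.cong)
  then show ?thesis
    by (simp add: sum.distrib card_bitvecs sum_divide_distrib mult.commute)
qed

theorem theorem1:
  fixes n :: nat
    and L :: "'l measure" and mu :: "'p \<Rightarrow> 'l measure"
    and xi :: "'m \<Rightarrow> nat \<Rightarrow> 'l \<Rightarrow> real"
    and Out :: "'m \<Rightarrow> nat set" and p :: "'p \<Rightarrow> 'm \<Rightarrow> nat \<Rightarrow> real"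
    and Prep :: "bool list \<Rightarrow> 'p" and Meas :: "nat \<Rightarrow> 'm"
  assumes n: "n \<ge> 1"
    and model: "hv_model L mu xi Out p"
    and pnc: "prep_noncontextual L mu Out p"
    and binary: "\<forall>y\<in>{1..n}. Out (Meas y) = {0, 1}"
    and oblivious: "\<forall>s\<in>Par n. \<forall>M. \<forall>k\<in>Out M.
       (\<Sum>x\<in>{x\<in>bitvecs n. \<not> sparity x s}. p (Prep x) M k)
     = (\<Sum>x\<in>{x\<in>bitvecs n. sparity x s}. p (Prep x) M k)"
  shows "(1 / (2 ^ n * real n)) *
           (\<Sum>y=1..n. \<Sum>x\<in>bitvecs n. p (Prep x) (Meas y) (of_bool (x ! (y - 1))))
         \<le> (real n + 1) / (2 * real n)"
proof -
  let ?a = "\<lambda>i l. xi (Meas (Suc i)) 0 l - xi (Meas (Suc i)) 1 l"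
  have "(\<Sum>i<n. \<Sum>x\<in>bitvecs n. bit_sign (x ! i) * integral\<^sup>L (mu (Prep x)) (?a i)) \<le> 2 ^ n"
  proof (rule parity_oblivious_bias_le)
    show "?a i \<in> borel_measurable L" for i
      using hv_modelD(3)[OF model] by (intro borel_measurable_diff)
    show "\<bar>?a i l\<bar> \<le> 1" if "i < n" for i l
      using binary that by (intro hv_model_binary_response_diff_bound[OF model]) simp
    show "(\<Sum>x\<in>bitvecs n. parity_character T x * integral\<^sup>L (mu (Prep x)) g) = 0"
      if "T \<subseteq> {..<n}" "2 \<le> card T" "g \<in> borel_measurable L" "\<And>l. \<bar>g l\<bar> \<le> B" for T g B
      by (rule parity_character_sum_eq_0[OF model pnc oblivious that])
  qed (use model in \<open>simp_all add: hv_modelD\<close>)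
  moreover have "(\<Sum>y=1..n. \<Sum>x\<in>bitvecs n. p (Prep x) (Meas y) (of_bool (x ! (y - 1))))
      = real n * 2 ^ n / 2 + (\<Sum>i<n. \<Sum>x\<in>bitvecs n. bit_sign (x ! i) * integral\<^sup>L (mu (Prep x)) (?a i)) / 2"
    using binary by (intro hv_model_success_sum[OF model]) simp
  ultimately show ?thesis
    using n by (simp add: field_simps)
qed

end
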